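(* Let $p,q$ be consecutive patterns of length 4 satisfying the standing assumptions below. Let $n\ge1$, $S,U\subseteq[n]$, and let $\epsilon\in I_n$ with $\operatorname{Em}(q,\epsilon)=S$ and $\operatorname{Em}(p,\epsilon)=U$. Then $\operatorname{Em}(p,\phi^{-1}_{\ge S}(\epsilon))\subseteq S\cup U$.
   Context: An inversion sequence of length $n$ is an integer sequence $\epsilon_1\cdots\epsilon_n$ with $0\le\epsilon_i<i$; $I_n$ is the set of them. The reduction of an integer word replaces each occurrence of its $k$-th smallest distinct value by $k-1$. A consecutive pattern $p=\underline{p_1p_2p_3p_4}$ occurs in $\epsilon$ at position $i$ if the reduction of $\epsilon_i\epsilon_{i+1}\epsilon_{i+2}\epsilon_{i+3}$ is $p_1p_2p_3p_4$; $\operatorname{Em}(p,\epsilon)$ is the set of such $i$. A pattern is non-overlapping if no two of its occurrences in any sequence overlap in more than one entry (i.e. no two occurrences are at positions differing by 1 or 2). Standing assumptions: $p$ and $q$ are each non-overlapping, agree in their first entries and in their last entries, have the same maximum entry $d$, and each contains every value in $\{0,\dots,d\}$. Change operation: if $p$ occurs in $\epsilon$ at $i$, let $f$ be the order-preserving bijection from $\{0,\dots,d\}$ onto the set of values $\{\epsilon_i,\dots,\epsilon_{i+3}\}$, so that $\epsilon_{i+j-1}=f(p_j)$; changing this occurrence to $q$ means replacing $\epsilon_{i+j-1}$ by $f(q_j)$ for $j=1,\dots,4$ (and symmetrically for changing an occurrence of $q$ to $p$). It is assumed that $p$ and $q$ are interchangeable, i.e. such changes (in either direction) applied to an inversion sequence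 always yield an inversion sequence. For $T\subseteq[n]$, let $I_{n,p}(\supseteq T)=\{\epsilon\in I_n:\operatorname{Em}(p,\epsilon)\supseteq T\}$ and similarly for $q$; $\phi_{\ge T}:I_{n,p}(\supseteq T)\to I_{n,q}(\supseteq T)$ changes the occurrences of $p$ at all positions in $T$ to occurrences of $q$, and it is assumed to be a bijection whose inverse $\phi^{-1}_{\ge T}$ changes the occurrences of $q$ at all positions in $T$ to occurrences of $p$. *)

theory Defs
  imports Main
begin

text \<open>Words are lists of naturals; entry i (1-indexed) of xs is xs ! (i - 1).\<close>

definition inv_seqs :: "nat \<Rightarrow> nat list set" where
  "inv_seqs n = {xs. length xs = n \<and> (\<forall>j<n. xs ! j < j + 1)}"

definition red :: "nat list \<Rightarrow> nat list" where
  "red w = map (\<lambda>x. card {y \<in> set w. y < x}) w"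

definition window :: "nat list \<Rightarrow> nat \<Rightarrow> nat list" where
  "window xs i = take 4 (drop (i - 1) xs)"

definition Em :: "nat list \<Rightarrow> nat list \<Rightarrow> nat set" where
  "Em p xs = {i. 1 \<le> i \<and> i + 3 \<le> length xs \<and> red (window xs i) = p}"

definition nonoverlapping :: "nat list \<Rightarrow> bool" where
  "nonoverlapping p \<longleftrightarrow>
     (\<forall>xs i j. i \<in> Em p xs \<longrightarrow> j \<in> Em p xs \<longrightarrow> i < j \<longrightarrow> i + 3 \<le> j)"

text \<open>Change the occurrence at position i (of some pattern) into pattern q:
  f is the order-preserving bijection from {0..d} onto the window's value set,
  i.e. f k = k-th smallest value of the window.\<close>
definition chg :: "nat list \<Rightarrow> nat list \<Rightarrow> nat \<Rightarrow> nat list" where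
  "chg q xs i = (let vs = sorted_list_of_set (set (window xs i)) in
     map (\<lambda>k. if i - 1 \<le> k \<and> k < i + 3 then vs ! (q ! (k - (i - 1))) else xs ! k)
       [0..<length xs])"

text \<open>Change the occurrences at all positions of T (in increasing order) into q.
  phiT p q T is the paper's phi_{>=T}; phiT q p T is the paper's phi^{-1}_{>=T}.\<close>
definition phiT :: "nat list \<Rightarrow> nat list \<Rightarrow> nat set \<Rightarrow> nat list \<Rightarrow> nat list" where
  "phiT p q T xs = foldl (chg q) xs (sorted_list_of_set T)"

definition Isup :: "nat \<Rightarrow> nat list \<Rightarrow> nat set \<Rightarrow> nat list set" where
  "Isup n p T = {xs \<in> inv_seqs n. T \<subseteq> Em p xs}"

definition standing :: "nat list \<Rightarrow> nat list \<Rightarrow> nat \<Rightarrow> bool" where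
  "standing p q d \<longleftrightarrow>
     length p = 4 \<and> length q = 4 \<and>
     nonoverlapping p \<and> nonoverlapping q \<and>
     p ! 0 = q ! 0 \<and> p ! 3 = q ! 3 \<and>
     Max (set p) = d \<and> Max (set q) = d \<and>
     set p = {0..d} \<and> set q = {0..d}"

definition interchangeable :: "nat list \<Rightarrow> nat list \<Rightarrow> bool" where
  "interchangeable p q \<longleftrightarrow>
     (\<forall>n xs i. xs \<in> inv_seqs n \<longrightarrow> i \<in> Em p xs \<longrightarrow> chg q xs i \<in> inv_seqs n) \<and>
     (\<forall>n xs i. xs \<in> inv_seqs n \<longrightarrow> i \<in> Em q xs \<longrightarrow> chg p xs i \<in> inv_seqs n)"

definition phi_bij :: "nat list \<Rightarrow> nat list \<Rightarrow> bool" where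
  "phi_bij p q \<longleftrightarrow>
     (\<forall>n T. T \<subseteq> {1..n} \<longrightarrow>
        bij_betw (phiT p q T) (Isup n p T) (Isup n q T) \<and>
        (\<forall>xs \<in> Isup n q T. phiT q p T xs \<in> Isup n p T \<and> phiT p q T (phiT q p T xs) = xs))"

end

theory Submission
  imports Defs
begin

text \<open>Changing an occurrence of q at position j into p rewrites only the two middle entries of
  its window, because p and q agree in their first and last entries. The positions in S are
  at least 3 apart since q is non-overlapping, so these changes do not interfere, and each
  j \<in> S becomes an occurrence of p. An occurrence i of p in the result is then either within
  distance 2 of some j \<in> S, forcing i = j because p is non-overlapping, or its window is
  untouched, so that i was already an occurrence of p in the original sequence.\<close>

lemma card_less_nth_strict_sorted:
  fixes vs :: "'a::linorder list"
  assumes "sorted_wrt (<) vs" "i < length vs"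
  shows "card {y \<in> set vs. y < vs ! i} = i"
proof -
  have "{y \<in> set vs. y < vs ! i} = set (take i vs)"
  proof (intro set_eqI iffI)
    fix y assume "y \<in> {y \<in> set vs. y < vs ! i}"
    then obtain m where m: "m < length vs" "y = vs ! m" "vs ! m < vs ! i"
      by (auto simp: in_set_conv_nth)
    have "m < i"
    proof (rule ccontr)
      assume "\<not> m < i"
      then have "vs ! i \<le> vs ! m"
        using assms(1) m(1) by (metis not_less sorted_nth_mono strict_sorted_imp_sorted)
      then show False using m by simp
    qed
    then show "y \<in> set (take i vs)"
      using m by (auto simp: in_set_conv_nth intro!: exI[of _ m])
  next
    fix y assume "y \<in> set (take i vs)"
    then obtain m where "m < i" "y = vs ! m"
      using assms(2) by (auto simp: in_set_conv_nth)
    then show "y \<in> {y \<in> set vs. y < vs ! i}"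
      using assms by (simp add: sorted_wrt_nth_less)
  qed
  moreover have "distinct (take i vs)"
    using assms(1) by (simp add: strict_sorted_iff)
  ultimately show ?thesis
    using assms(2) by (simp add: distinct_card)
qed

lemma nth_sorted_list_of_set_red:
  assumes "t < length w"
  shows "sorted_list_of_set (set w) ! (red w ! t) = w ! t"
proof -
  let ?vs = "sorted_list_of_set (set w)"
  obtain m where m: "m < length ?vs" "?vs ! m = w ! t"
    using assms by (metis in_set_conv_nth nth_mem set_sorted_list_of_set finite_set)
  have "red w ! t = card {y \<in> set w. y < w ! t}"
    using assms by (simp add: red_def)
  also have "\<dots> = card {y \<in> set ?vs. y < ?vs ! m}"
    using m by simp
  also have "\<dots> = m"
    using card_less_nth_strict_sorted[of ?vs m] m by simp
  finally show ?thesis using m by simp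
qed

lemma set_red: "set (red w) = {..<card (set w)}"
proof -
  let ?vs = "sorted_list_of_set (set w)"
  let ?rank = "\<lambda>x. card {y \<in> set w. y < x}"
  have "set (red w) = set (map ?rank ?vs)"
    by (simp add: red_def)
  also have "map ?rank ?vs = [0..<length ?vs]"
    using card_less_nth_strict_sorted[of ?vs] by (intro nth_equalityI) simp_all
  finally show ?thesis by (simp add: atLeast0LessThan)
qed

lemma red_map_nth:
  assumes "sorted_wrt (<) vs" "set p = {..<length vs}"
  shows "red (map ((!) vs) p) = p"
proof -
  have "set (map ((!) vs) p) = set vs"
    using assms(2) nth_image[of "length vs" vs] by (simp add: atLeast0LessThan)
  moreover have "p ! t < length vs" if "t < length p" for t
    using assms(2) that nth_mem by blast
  ultimately show ?thesis
    using assms(1) by (intro nth_equalityI) (simp_all add: red_def card_less_nth_strict_sorted)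
qed

lemma length_window: "1 \<le> i \<Longrightarrow> i + 3 \<le> length xs \<Longrightarrow> length (window xs i) = 4"
  by (simp add: window_def)

lemma nth_window: "i + 3 \<le> length xs \<Longrightarrow> t < 4 \<Longrightarrow> window xs i ! t = xs ! (i - 1 + t)"
  by (simp add: window_def)

lemma window_cong:
  assumes "1 \<le> i" "i + 3 \<le> length xs" "length xs = length ys"
    and "\<And>t. t < 4 \<Longrightarrow> xs ! (i - 1 + t) = ys ! (i - 1 + t)"
  shows "window xs i = window ys i"
  using assms by (intro nth_equalityI) (simp_all add: length_window nth_window)

lemma length_chg [simp]: "length (chg p xs j) = length xs"
  by (simp add: chg_def)

lemma nth_chg:
  "k < length xs \<Longrightarrow> chg p xs j ! k =
    (if j - 1 \<le> k \<and> k < j + 3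
     then sorted_list_of_set (set (window xs j)) ! (p ! (k - (j - 1))) else xs ! k)"
  by (simp add: chg_def)

lemma nth_chg_outside: "k < length xs \<Longrightarrow> k < j - 1 \<or> j + 3 \<le> k \<Longrightarrow> chg p xs j ! k = xs ! k"
  by (auto simp: nth_chg)

lemma nth_chg_window:
  assumes "1 \<le> j" "j + 3 \<le> length xs" "t < 4"
  shows "chg p xs j ! (j - 1 + t) = sorted_list_of_set (set (window xs j)) ! (p ! t)"
proof -
  have "j - 1 + t < length xs" "j - 1 \<le> j - 1 + t \<and> j - 1 + t < j + 3"
    using assms by linarith+
  then show ?thesis
    by (simp only: nth_chg simp_thms if_True add_diff_cancel_left')
qed

lemma nth_chg_window_eq:
  assumes "j \<in> Em q xs" "t < 4" "p ! t = q ! t"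
  shows "chg p xs j ! (j - 1 + t) = xs ! (j - 1 + t)"
proof -
  have j: "1 \<le> j" "j + 3 \<le> length xs" "red (window xs j) = q"
    using assms(1) by (simp_all add: Em_def)
  have "chg p xs j ! (j - 1 + t) = sorted_list_of_set (set (window xs j)) ! (red (window xs j) ! t)"
    using nth_chg_window[OF j(1,2) assms(2)] assms(3) j(3) by simp
  also have "\<dots> = xs ! (j - 1 + t)"
    using nth_sorted_list_of_set_red[of t "window xs j"] nth_window[of j xs t] j assms(2)
    by (simp add: length_window)
  finally show ?thesis .
qed

lemma window_chg_far:
  assumes "j \<in> Em q xs" "p ! 0 = q ! 0" "p ! 3 = q ! 3"
    and "1 \<le> i" "i + 3 \<le> length xs" "i + 3 \<le> j \<or> j + 3 \<le> i"
  shows "window (chg p xs j) i = window xs i"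
proof (rule window_cong)
  fix t :: nat assume "t < 4"
  have j: "1 \<le> j" "j + 3 \<le> length xs"
    using assms(1) by (simp_all add: Em_def)
  \<comment> \<open>Windows at distance exactly 3 share one entry, which is an end entry of the window at j.\<close>
  consider "i - 1 + t < j - 1 \<or> j + 3 \<le> i - 1 + t" | "i - 1 + t = j - 1 + 0" | "i - 1 + t = j - 1 + 3"
    using assms(4,6) j(1) \<open>t < 4\<close> by linarith
  then show "chg p xs j ! (i - 1 + t) = xs ! (i - 1 + t)"
  proof cases
    case 1
    moreover have "i - 1 + t < length xs"
      using assms(4,5) \<open>t < 4\<close> by linarith
    ultimately show ?thesis
      by (simp add: nth_chg_outside)
  next
    case 2
    show ?thesis
      unfolding 2 using nth_chg_window_eq[OF assms(1), of 0] assms(2) by simp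
  next
    case 3
    show ?thesis
      unfolding 3 using nth_chg_window_eq[OF assms(1), of 3] assms(3) by simp
  qed
qed (use assms in simp_all)

lemma mem_Em_chg:
  assumes "j \<in> Em q xs" "length p = 4" "set p = set q"
  shows "j \<in> Em p (chg p xs j)"
proof -
  let ?w = "window xs j"
  let ?vs = "sorted_list_of_set (set ?w)"
  have j: "1 \<le> j" "j + 3 \<le> length xs" "red ?w = q"
    using assms(1) by (simp_all add: Em_def)
  have "window (chg p xs j) j = map ((!) ?vs) p"
    using j assms(2) nth_chg_window[OF j(1,2)]
    by (intro nth_equalityI) (simp_all add: length_window nth_window)
  moreover have "set p = {..<length ?vs}"
    using assms(3) j(3) set_red[of ?w] by simp
  ultimately show ?thesis
    using j red_map_nth[of ?vs p] by (simp add: Em_def)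
qed

lemma mem_Em_window_cong:
  "i \<in> Em r xs \<Longrightarrow> length ys = length xs \<Longrightarrow> window ys i = window xs i \<Longrightarrow> i \<in> Em r ys"
  by (simp add: Em_def)

lemma finite_Em: "finite (Em p xs)"
  by (rule finite_subset[of _ "{..length xs}"]) (auto simp: Em_def)

lemma nonoverlapping_Em_far:
  assumes "nonoverlapping p" "i \<in> Em p xs" "j \<in> Em p xs" "i \<noteq> j"
  shows "i + 3 \<le> j \<or> j + 3 \<le> i"
  using assms unfolding nonoverlapping_def by (metis linorder_neqE_nat)

lemma sorted_list_of_Em_spaced:
  assumes "nonoverlapping p"
  shows "sorted_wrt (\<lambda>a b. a + 3 \<le> b) (sorted_list_of_set (Em p xs))"
  using strict_sorted_list_of_set[of "Em p xs"]
proof (rule sorted_wrt_mono_rel[rotated])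
  fix a b assume "a \<in> set (sorted_list_of_set (Em p xs))" "b \<in> set (sorted_list_of_set (Em p xs))" "a < b"
  then show "a + 3 \<le> b"
    using nonoverlapping_Em_far[OF assms] finite_Em by fastforce
qed

lemma length_foldl_chg [simp]: "length (foldl (chg p) xs L) = length xs"
  by (induction L arbitrary: xs) simp_all

lemma window_foldl_chg_far:
  assumes "p ! 0 = q ! 0" "p ! 3 = q ! 3"
    and "sorted_wrt (\<lambda>a b. a + 3 \<le> b) L" "set L \<subseteq> Em q xs"
    and "1 \<le> i" "i + 3 \<le> length xs" "\<forall>j\<in>set L. i + 3 \<le> j \<or> j + 3 \<le> i"
  shows "window (foldl (chg p) xs L) i = window xs i"
  using assms(3-)
proof (induction L arbitrary: i rule: rev_induct)
  case Nil
  then show ?case by simp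
next
  case (snoc j L)
  let ?ys = "foldl (chg p) xs L"
  have L: "sorted_wrt (\<lambda>a b. a + 3 \<le> b) L" "set L \<subseteq> Em q xs" "\<forall>l\<in>set L. l + 3 \<le> j"
    using snoc.prems(1,2) by (simp_all add: sorted_wrt_append)
  have "j \<in> Em q xs"
    using snoc.prems(2) by simp
  then have "j \<in> Em q ?ys"
    by (rule mem_Em_window_cong) (use snoc.IH[OF L(1,2)] L(3) \<open>j \<in> Em q xs\<close> in \<open>simp_all add: Em_def\<close>)
  then have "window (chg p ?ys j) i = window ?ys i"
    by (rule window_chg_far) (use assms(1,2) snoc.prems(3-5) in simp_all)
  also have "\<dots> = window xs i"
    using snoc.IH[OF L(1,2)] snoc.prems(3-5) by simp
  finally show ?case by simp
qed

lemma Em_foldl_chg: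
  assumes "p ! 0 = q ! 0" "p ! 3 = q ! 3" "length p = 4" "set p = set q"
    and "sorted_wrt (\<lambda>a b. a + 3 \<le> b) L" "set L \<subseteq> Em q xs"
  shows "set L \<subseteq> Em p (foldl (chg p) xs L)"
  using assms(5,6)
proof (induction L rule: rev_induct)
  case Nil
  then show ?case by simp
next
  case (snoc j L)
  let ?ys = "foldl (chg p) xs L"
  have L: "sorted_wrt (\<lambda>a b. a + 3 \<le> b) L" "set L \<subseteq> Em q xs" "\<forall>l\<in>set L. l + 3 \<le> j"
    using snoc.prems by (simp_all add: sorted_wrt_append)
  have "j \<in> Em q xs"
    using snoc.prems(2) by simp
  then have j: "j \<in> Em q ?ys"
    by (rule mem_Em_window_cong)
      (use window_foldl_chg_far[OF assms(1,2) L(1,2)] L(3) \<open>j \<in> Em q xs\<close> in \<open>simp_all add: Em_def\<close>)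
  have "l \<in> Em p (chg p ?ys j)" if "l \<in> set L" for l
  proof (rule mem_Em_window_cong)
    show "l \<in> Em p ?ys"
      using snoc.IH[OF L(1,2)] that by blast
    then show "window (chg p ?ys j) l = window ?ys l"
      using window_chg_far[OF j assms(1,2)] L(3) that by (simp add: Em_def)
  qed simp
  then show ?case
    using mem_Em_chg[OF j assms(3,4)] by auto
qed

lemma Em_foldl_chg_sorted_Em_subset:
  assumes "p ! 0 = q ! 0" "p ! 3 = q ! 3" "length p = 4" "set p = set q"
    and "nonoverlapping p" "nonoverlapping q"
  shows "Em p (foldl (chg p) xs (sorted_list_of_set (Em q xs))) \<subseteq> Em q xs \<union> Em p xs"
proof
  let ?L = "sorted_list_of_set (Em q xs)"
  let ?ys = "foldl (chg p) xs ?L"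
  fix i assume i: "i \<in> Em p ?ys"
  have L: "set ?L = Em q xs" "sorted_wrt (\<lambda>a b. a + 3 \<le> b) ?L"
    using finite_Em sorted_list_of_Em_spaced[OF assms(6)] by auto
  show "i \<in> Em q xs \<union> Em p xs"
  proof (cases "\<forall>j\<in>Em q xs. i + 3 \<le> j \<or> j + 3 \<le> i")
    case True
    have "window ?ys i = window xs i"
      by (rule window_foldl_chg_far[OF assms(1,2) L(2)]) (use i True L(1) in \<open>simp_all add: Em_def\<close>)
    then have "i \<in> Em p xs"
      using mem_Em_window_cong[OF i] by simp
    then show ?thesis by simp
  next
    case False
    then obtain j where j: "j \<in> Em q xs" "\<not> (i + 3 \<le> j \<or> j + 3 \<le> i)"
      by blast
    moreover have "j \<in> Em p ?ys"
      using Em_foldl_chg[OF assms(1-4) L(2)] L(1) j(1) by blast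
    ultimately have "i = j"
      using nonoverlapping_Em_far[OF assms(5) i] by blast
    then show ?thesis
      using j(1) by simp
  qed
qed

theorem lemma1:
  fixes p q :: "nat list" and d n :: nat and S U :: "nat set" and xs :: "nat list"
  assumes "standing p q d"
    and "interchangeable p q"
    and "phi_bij p q"
    and "n \<ge> 1"
    and "S \<subseteq> {1..n}" and "U \<subseteq> {1..n}"
    and "xs \<in> inv_seqs n"
    and "Em q xs = S" and "Em p xs = U"
  shows "Em p (phiT q p S xs) \<subseteq> S \<union> U"
proof -
  have "p ! 0 = q ! 0" "p ! 3 = q ! 3" "length p = 4" "set p = set q"
    and "nonoverlapping p" "nonoverlapping q"
    using assms(1) by (simp_all add: standing_def)
  then show ?thesis
    using Em_foldl_chg_sorted_Em_subset[of p q xs] assms(8,9) by (simp add: phiT_def)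
qed

end
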